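(* Let $\Sigma$ be a finite alphabet and let $\mathbf w$ be a right-infinite word over $\Sigma$ with linear factor complexity. Then the set of primitive factors $y$ of $\mathbf w$ such that $y^n$ is a factor of $\mathbf w$ for every $n\ge 1$ is finite.
   Context: A factor of $\mathbf w$ is a finite block of contiguous symbols of $\mathbf w$. A nonempty word is primitive if it is not of the form $z^m$ with $m\ge 2$. $p_{\mathbf w}(n)$ is the number of distinct factors of $\mathbf w$ of length $n$; $\mathbf w$ has linear factor complexity if there are constants $A,B$ with $p_{\mathbf w}(n)\le An+B$ for all $n$. *)

theory Defs
  imports Complex_Main
begin

definition factor :: "'a list \<Rightarrow> (nat \<Rightarrow> 'a) \<Rightarrow> bool" where
  "factor u w \<longleftrightarrow> (\<exists>i. u = map w [i..<i + length u])"

definition factors_of_length :: "(nat \<Rightarrow> 'a) \<Rightarrow> nat \<Rightarrow> 'a list set" where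
  "factors_of_length w n = {u. length u = n \<and> factor u w}"

definition complexity :: "(nat \<Rightarrow> 'a) \<Rightarrow> nat \<Rightarrow> nat" where
  "complexity w n = card (factors_of_length w n)"

definition linear_complexity :: "(nat \<Rightarrow> 'a) \<Rightarrow> bool" where
  "linear_complexity w \<longleftrightarrow> (\<exists>A B::real. \<forall>n. real (complexity w n) \<le> A * real n + B)"

definition list_pow :: "'a list \<Rightarrow> nat \<Rightarrow> 'a list" where
  "list_pow z m = concat (replicate m z)"

definition primitive :: "'a list \<Rightarrow> bool" where
  "primitive y \<longleftrightarrow> y \<noteq> [] \<and> \<not> (\<exists>z m. m \<ge> 2 \<and> y = list_pow z m)"

end

theory Submission
  imports Defs
begin

text \<open>If \<open>w\<close> is eventually periodic with period \<open>P\<close>, a long power of a primitive \<open>y\<close> occurring in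
  the periodic part has both periods \<open>|y|\<close> and \<open>P\<close>, so by Fine and Wilf and primitivity \<open>|y|\<close> divides
  \<open>P\<close>. Otherwise every power \<open>y\<^sup>n\<close> occurring in \<open>w\<close> eventually stops being continued
  periodically, which produces a right special factor of every length \<open>n\<close> that is a segment of
  \<open>y y y \<dots>\<close>; again by Fine and Wilf, primitive words of different lengths give different such
  factors. Hence \<open>K\<close> admissible lengths force \<open>p(n + 1) - p(n) \<ge> K\<close> for large \<open>n\<close>, so \<open>K\<close>
  is at most the slope of a linear bound for \<open>p\<close>. Either way the lengths, hence the words, are
  bounded.\<close>

definition has_period :: "(nat \<Rightarrow> 'a) \<Rightarrow> nat \<Rightarrow> nat \<Rightarrow> bool" where
  "has_period f n p \<longleftrightarrow> (\<forall>t. t + p < n \<longrightarrow> f t = f (t + p))"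

lemma has_periodD: "has_period f n p \<Longrightarrow> t + p < n \<Longrightarrow> f t = f (t + p)"
  unfolding has_period_def by blast

lemma has_period_cong:
  "(\<And>t. t < n \<Longrightarrow> f t = g t) \<Longrightarrow> has_period f n p \<longleftrightarrow> has_period g n p"
  unfolding has_period_def by (metis add_lessD1)

lemma has_period_mono: "has_period f n p \<Longrightarrow> m \<le> n \<Longrightarrow> has_period f m p"
  unfolding has_period_def by simp

lemma has_period_diff:
  assumes p: "has_period f n p" and q: "has_period f n q" and "p < q" "p + q \<le> n"
  shows "has_period f n (q - p)"
  unfolding has_period_def
proof (intro allI impI)
  fix t assume t: "t + (q - p) < n"
  show "f t = f (t + (q - p))"
  proof (cases "t + q < n")
    case True
    then have "f t = f (t + (q - p) + p)"
      using has_periodD[OF q] \<open>p < q\<close> by (simp add: add.assoc)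
    also have "\<dots> = f (t + (q - p))"
      using has_periodD[OF p, of "t + (q - p)"] True \<open>p < q\<close> by simp
    finally show ?thesis .
  next
    case False
    then have "p \<le> t" using \<open>p + q \<le> n\<close> t by linarith
    then have "f t = f (t - p)" using has_periodD[OF p, of "t - p"] t by simp
    also have "\<dots> = f (t + (q - p))"
      using has_periodD[OF q, of "t - p"] \<open>p \<le> t\<close> \<open>p < q\<close> t by simp
    finally show ?thesis .
  qed
qed

text \<open>The weak form of the Fine--Wilf theorem, by the Euclidean algorithm on the periods.\<close>

lemma has_period_gcd:
  "has_period f n p \<Longrightarrow> has_period f n q \<Longrightarrow> 0 < p \<Longrightarrow> 0 < q \<Longrightarrow> p + q \<le> n
    \<Longrightarrow> has_period f n (gcd p q)"
proof (induction "p + q" arbitrary: p q rule: less_induct)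
  case less
  consider "p = q" | "p < q" | "q < p" by linarith
  then show ?case
  proof cases
    case 1
    then show ?thesis using less.prems(1) by simp
  next
    case 2
    then have "has_period f n (gcd p (q - p))"
      using less.hyps[of p "q - p"] less.prems has_period_diff[of f n p q] by simp
    then show ?thesis using 2 by (metis gcd.commute gcd_diff1_nat less_imp_le)
  next
    case 3
    then have "has_period f n (gcd q (p - q))"
      using less.hyps[of q "p - q"] less.prems has_period_diff[of f n q p] by simp
    then show ?thesis using 3 by (metis gcd.commute gcd_diff1_nat less_imp_le)
  qed
qed

lemma length_list_pow [simp]: "length (list_pow z m) = m * length z"
  by (simp add: list_pow_def length_concat sum_list_replicate)

lemma nth_list_pow: "k < m * length z \<Longrightarrow> list_pow z m ! k = z ! (k mod length z)"
proof (induction m arbitrary: k)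
  case (Suc m)
  show ?case
  proof (cases "k < length z")
    case True
    then show ?thesis by (simp add: list_pow_def nth_append)
  next
    case False
    then have "list_pow z (Suc m) ! k = list_pow z m ! (k - length z)"
      by (simp add: list_pow_def nth_append)
    with Suc False show ?thesis by (simp add: le_mod_geq)
  qed
qed simp

lemma primitive_rotate_fixed:
  assumes "primitive y" "0 < d" "d dvd length y" "rotate d y = y"
  shows "d = length y"
proof (rule ccontr)
  assume "d \<noteq> length y"
  moreover have "d \<le> length y" using assms(1,3) by (simp add: dvd_imp_le primitive_def)
  ultimately have "d < length y" by simp
  have mod_d: "y ! k = y ! (k mod d)" if "k < length y" for k
    using that
  proof (induction k rule: less_induct)
    case (less k)
    show ?case
    proof (cases "k < d")
      case False
      then have "y ! (k - d) = y ! k"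
        using nth_rotate[of "k - d" y d] assms(4) less.prems by simp
      with less False assms(2) show ?thesis by (simp add: le_mod_geq)
    qed simp
  qed
  obtain c where c: "length y = d * c" using assms(3) by (rule dvdE)
  have "c \<noteq> 0" "c \<noteq> 1" using c \<open>d < length y\<close> by auto
  then have "2 \<le> c" by linarith
  moreover have "y = list_pow (take d y) c"
  proof (rule nth_equalityI)
    show "length y = length (list_pow (take d y) c)" using c \<open>d < length y\<close> by simp
    fix k assume "k < length y"
    then have "list_pow (take d y) c ! k = take d y ! (k mod d)"
      using c \<open>d < length y\<close> by (simp add: nth_list_pow mult.commute)
    also have "\<dots> = y ! k" using mod_d[OF \<open>k < length y\<close>] assms(2) by simp
    finally show "y ! k = list_pow (take d y) c ! k" by simp
  qed
  ultimately show False using assms(1) unfolding primitive_def by blast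
qed

text \<open>The periodic word \<open>y y y \<dots>\<close> read from position \<open>s\<close> (junk if \<open>y = []\<close>).\<close>

definition shifted_power :: "'a list \<Rightarrow> nat \<Rightarrow> nat \<Rightarrow> 'a" where
  "shifted_power y s t = y ! ((s + t) mod length y)"

lemma has_period_shifted_power: "has_period (shifted_power y s) n (length y)"
  unfolding has_period_def shifted_power_def by (simp add: add.assoc[symmetric])

lemma rotate_fixed_if_has_period:
  assumes "has_period (shifted_power y s) (length y + d) d"
  shows "rotate d y = y"
proof (rule nth_equalityI)
  fix k assume "k < length (rotate d y)"
  then have k: "k < length y" by simp
  define t where "t = (k + (length y - s mod length y)) mod length y"
  have t: "t < length y" unfolding t_def by (rule mod_less_divisor) (use k in linarith)
  have "(s + t) mod length y = (s mod length y + (k + (length y - s mod length y))) mod length y"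
    unfolding t_def by (simp add: mod_add_left_eq mod_add_right_eq)
  also have "s mod length y + (k + (length y - s mod length y)) = k + length y"
    using mod_less_divisor[of "length y" s] k by linarith
  finally have st: "(s + t) mod length y = k" using k by simp
  have "(s + (t + d)) mod length y = ((s + t) mod length y + d) mod length y"
    by (simp add: mod_add_left_eq add.assoc)
  then have "(s + (t + d)) mod length y = (k + d) mod length y"
    using st by simp
  then have "rotate d y ! k = shifted_power y s (t + d)"
    using k by (simp add: shifted_power_def nth_rotate add.commute)
  also have "\<dots> = shifted_power y s t" using has_periodD[OF assms] t by simp
  also have "\<dots> = y ! k" using st by (simp add: shifted_power_def)
  finally show "rotate d y ! k = y ! k" .
qed simp

lemma length_dvd_period_of_shifted_power:
  assumes "primitive y" "has_period (shifted_power y s) n q" "0 < q" "length y + q \<le> n"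
  shows "length y dvd q"
proof -
  define d where "d = gcd (length y) q"
  have "0 < length y" using assms(1) by (simp add: primitive_def)
  then have "has_period (shifted_power y s) n d"
    unfolding d_def using has_period_gcd[OF has_period_shifted_power assms(2)] assms(3,4) by simp
  moreover have "d \<le> q" "d dvd q" "0 < d" "d dvd length y" using assms(3) by (simp_all add: d_def)
  ultimately have "has_period (shifted_power y s) (length y + d) d"
    using assms(4) by (simp add: has_period_mono)
  then have "rotate d y = y" by (rule rotate_fixed_if_has_period)
  then have "d = length y" by (rule primitive_rotate_fixed[OF assms(1) \<open>0 < d\<close> \<open>d dvd length y\<close>])
  with \<open>d dvd q\<close> show ?thesis by simp
qed

lemma length_eq_if_shifted_powers_agree:
  assumes "primitive y" "primitive z" "length y + length z \<le> n"
    and "\<And>t. t < n \<Longrightarrow> shifted_power y r t = shifted_power z s t"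
  shows "length y = length z"
proof -
  have len_dvd: "length y dvd length z" if "primitive y" "primitive z" "length y + length z \<le> n"
    and "\<And>t. t < n \<Longrightarrow> shifted_power y r t = shifted_power z s t" for y z :: "'a list" and r s
  proof (rule length_dvd_period_of_shifted_power[OF that(1)])
    have "has_period (shifted_power y r) n (length z) \<longleftrightarrow> has_period (shifted_power z s) n (length z)"
      by (rule has_period_cong) (rule that(4))
    then show "has_period (shifted_power y r) n (length z)"
      using has_period_shifted_power by blast
    show "0 < length z" using that(2) by (simp add: primitive_def)
  qed (use that(3) in simp)
  have "length y dvd length z" using len_dvd[OF assms] .
  moreover have "length z dvd length y"
    using len_dvd[OF assms(2,1)] assms(3,4) by (metis add.commute)
  ultimately show ?thesis by (rule dvd_antisym)
qed

lemma factor_map_upt: "factor (map w [i..<j]) w"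
  unfolding factor_def by (rule exI[of _ i]) (cases "i \<le> j", auto)

lemma factor_list_pow_occurrence:
  assumes "factor (list_pow y m) w"
  obtains i where "\<And>t. t < m * length y \<Longrightarrow> w (i + t) = y ! (t mod length y)"
proof -
  obtain i where i: "list_pow y m = map w [i..<i + m * length y]"
    using assms unfolding factor_def by auto
  show thesis
  proof
    fix t assume t: "t < m * length y"
    have "w (i + t) = list_pow y m ! t" using t by (simp add: i)
    then show "w (i + t) = y ! (t mod length y)" using t by (simp add: nth_list_pow)
  qed
qed

definition eventually_periodic :: "(nat \<Rightarrow> 'a) \<Rightarrow> bool" where
  "eventually_periodic w \<longleftrightarrow> (\<exists>i P. 0 < P \<and> (\<forall>k\<ge>i. w (k + P) = w k))"

lemma length_dvd_eventual_period:
  assumes "primitive y" "\<forall>m\<ge>1. factor (list_pow y m) w"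
    and "0 < P" "\<forall>k\<ge>i. w (k + P) = w k"
  shows "length y dvd P"
proof -
  define L where "L = length y"
  have "0 < L" using assms(1) by (simp add: primitive_def L_def)
  have "factor (list_pow y (i + L + P)) w" using assms(2,3) by simp
  then obtain j where j: "\<And>t. t < (i + L + P) * L \<Longrightarrow> w (j + t) = y ! (t mod L)"
    using factor_list_pow_occurrence unfolding L_def by blast
  define u where "u t = w (j + i + t)" for t
  have "has_period u (L + P) P"
    unfolding has_period_def
  proof (intro allI impI)
    fix t
    have "i \<le> j + i + t" by simp
    then have "w (j + i + t + P) = w (j + i + t)" using assms(4) by blast
    then show "u t = u (t + P)" by (simp add: u_def add.assoc)
  qed
  moreover have "u t = shifted_power y i t" if "t < L + P" for t
  proof -
    have "i + t < i + L + P" using that by simp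
    also have "\<dots> \<le> (i + L + P) * L" using \<open>0 < L\<close> by simp
    finally show ?thesis using j[of "i + t"] by (simp add: u_def shifted_power_def L_def add.assoc)
  qed
  ultimately have "has_period (shifted_power y i) (L + P) P"
    using has_period_cong by metis
  then show ?thesis
    unfolding L_def using length_dvd_period_of_shifted_power[OF assms(1) _ assms(3)] by simp
qed

definition right_special :: "(nat \<Rightarrow> 'a) \<Rightarrow> nat \<Rightarrow> 'a list set" where
  "right_special w n =
    {u. length u = n \<and> (\<exists>a b. a \<noteq> b \<and> factor (u @ [a]) w \<and> factor (u @ [b]) w)}"

lemma right_special_at_break:
  assumes "n \<le> k" "\<And>t. k - n \<le> t \<Longrightarrow> t < k \<Longrightarrow> w (t + L) = w t" "w (k + L) \<noteq> w k"
  shows "map w [k + L - n..<k + L] \<in> right_special w n"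
proof -
  have "map w [k + L - n..<k + L] = map w [k - n..<k]"
  proof (rule nth_equalityI)
    fix t assume "t < length (map w [k + L - n..<k + L])"
    then have "w (k - n + t + L) = w (k - n + t)" using assms(1) assms(2)[of "k - n + t"] by simp
    moreover have "k + L - n + t = k - n + t + L" using assms(1) by simp
    ultimately show "map w [k + L - n..<k + L] ! t = map w [k - n..<k] ! t"
      using \<open>t < _\<close> by (simp add: add.commute add.left_commute)
  qed (use assms(1) in simp)
  then have "factor (map w [k + L - n..<k + L] @ [w k]) w"
    "factor (map w [k + L - n..<k + L] @ [w (k + L)]) w"
    using assms(1) factor_map_upt[of w "k - n" "Suc k"] factor_map_upt[of w "k + L - n" "Suc (k + L)"]
    by simp_all
  then show ?thesis unfolding right_special_def using assms(1,3) by auto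
qed

lemma extend_by_period:
  assumes "y \<noteq> []" "\<And>t. t < length y \<Longrightarrow> w (i + t) = y ! t"
    and "\<And>t. i \<le> t \<Longrightarrow> t < k \<Longrightarrow> w (t + length y) = w t"
    and "t < k + length y - i"
  shows "w (i + t) = y ! (t mod length y)"
  using assms(4)
proof (induction t rule: less_induct)
  case (less t)
  show ?case
  proof (cases "t < length y")
    case False
    then have "w (i + t) = w (i + (t - length y))"
      using assms(3)[of "i + (t - length y)"] less.prems by simp
    also have "\<dots> = y ! ((t - length y) mod length y)"
    proof (rule less.IH)
      show "t - length y < t" using False length_greater_0_conv[of y] assms(1) by arith
      show "t - length y < k + length y - i" using less.prems by simp
    qed
    finally show ?thesis using False by (simp add: le_mod_geq)
  qed (simp add: assms(2))
qed

lemma first_period_break: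
  assumes "\<not> eventually_periodic w" "0 < L"
  obtains k where "i \<le> k" "w (k + L) \<noteq> w k" "\<And>t. i \<le> t \<Longrightarrow> t < k \<Longrightarrow> w (t + L) = w t"
proof -
  have "\<exists>k\<ge>i. w (k + L) \<noteq> w k"
    using assms unfolding eventually_periodic_def by blast
  define k where "k = (LEAST k. i \<le> k \<and> w (k + L) \<noteq> w k)"
  have "i \<le> k" "w (k + L) \<noteq> w k"
    using LeastI_ex[OF \<open>\<exists>k\<ge>i. _\<close>] unfolding k_def by auto
  moreover have "w (t + L) = w t" if "i \<le> t" "t < k" for t
    using not_less_Least[of t "\<lambda>k. i \<le> k \<and> w (k + L) \<noteq> w k"] that unfolding k_def by auto
  ultimately show thesis using that by blast
qed

lemma right_special_segment_of_power:
  assumes "\<not> eventually_periodic w" "y \<noteq> []" "factor (list_pow y (Suc n)) w"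
  obtains s where "map (shifted_power y s) [0..<n] \<in> right_special w n"
proof -
  define L where "L = length y"
  have "0 < L" using assms(2) by (simp add: L_def)
  obtain i where i: "\<And>t. t < Suc n * L \<Longrightarrow> w (i + t) = y ! (t mod L)"
    using factor_list_pow_occurrence[OF assms(3)] unfolding L_def by blast
  obtain k where k: "i \<le> k" "w (k + L) \<noteq> w k"
    and before_k: "\<And>t. i \<le> t \<Longrightarrow> t < k \<Longrightarrow> w (t + L) = w t"
    using first_period_break[OF assms(1) \<open>0 < L\<close>] by blast
  have "i + n \<le> k"
  proof (rule ccontr)
    assume "\<not> i + n \<le> k"
    then have "k - i < n" using k(1) by linarith
    moreover have "n \<le> n * L" using \<open>0 < L\<close> by simp
    ultimately have "k - i < n * L" by linarith
    then have "k - i + L < Suc n * L" "k - i < Suc n * L" by simp_all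
    then have "w (i + (k - i + L)) = w (i + (k - i))" by (simp add: i)
    then show False using k by simp
  qed
  have periodic: "w (i + t) = y ! (t mod L)" if "t < k + L - i" for t
    using extend_by_period[OF assms(2), of w i k t] i before_k that \<open>0 < L\<close> unfolding L_def by simp
  define s where "s = k + L - n - i"
  have "map w [k + L - n..<k + L] \<in> right_special w n"
    using \<open>i + n \<le> k\<close> before_k k(2) by (intro right_special_at_break) auto
  moreover have "map w [k + L - n..<k + L] = map (shifted_power y s) [0..<n]"
  proof (rule nth_equalityI)
    fix t assume "t < length (map w [k + L - n..<k + L])"
    then have "t < n" using \<open>i + n \<le> k\<close> by simp
    then have "k + L - n + t = i + (s + t)" "s + t < k + L - i"
      using \<open>i + n \<le> k\<close> by (simp_all add: s_def)
    then show "map w [k + L - n..<k + L] ! t = map (shifted_power y s) [0..<n] ! t"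
      using \<open>t < n\<close> periodic[of "s + t"] by (simp add: shifted_power_def L_def add.assoc)
  qed (use \<open>i + n \<le> k\<close> in simp)
  ultimately show thesis using that by simp
qed

lemma finite_factors_length_le:
  assumes "finite \<Sigma>" "\<forall>i. w i \<in> \<Sigma>"
  shows "finite {u. factor u w \<and> length u \<le> n}"
proof (rule finite_subset[OF _ finite_lists_length_le[OF assms(1), of n]])
  have "set u \<subseteq> \<Sigma>" if u: "factor u w" for u
  proof -
    obtain i where "u = map w [i..<i + length u]" using u unfolding factor_def by blast
    then have "set u = w ` {i..<i + length u}" by (metis set_map set_upt)
    then show ?thesis using assms(2) by auto
  qed
  then show "{u. factor u w \<and> length u \<le> n} \<subseteq> {xs. set xs \<subseteq> \<Sigma> \<and> length xs \<le> n}" by blast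
qed

lemma finite_factors_of_length:
  assumes "finite \<Sigma>" "\<forall>i. w i \<in> \<Sigma>"
  shows "finite (factors_of_length w n)"
  using finite_factors_length_le[OF assms, of n]
  by (rule finite_subset[rotated]) (auto simp: factors_of_length_def)

lemma factor_snoc:
  assumes "factor (u @ [a]) w"
  shows "factor u w"
proof -
  obtain i where "u @ [a] = map w [i..<i + length u] @ [w (i + length u)]"
    using assms unfolding factor_def by auto
  then show ?thesis unfolding factor_def by auto
qed

lemma factor_snoc_exists: "factor u w \<Longrightarrow> \<exists>a. factor (u @ [a]) w"
  unfolding factor_def by (metis add_Suc_right length_append_singleton map_append list.map upt_Suc le_add1)

text \<open>Every factor of length \<open>n\<close> has at least one right extension, a right special one at
  least two.\<close>

lemma complexity_Suc_ge:
  assumes "finite \<Sigma>" "\<forall>i. w i \<in> \<Sigma>"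
  shows "complexity w n + card (right_special w n) \<le> complexity w (Suc n)"
proof -
  define F where "F = factors_of_length w n"
  define E where "E u = {a. factor (u @ [a]) w}" for u
  have finF: "finite F" unfolding F_def by (rule finite_factors_of_length[OF assms])
  have finE: "finite (E u)" for u
    using assms unfolding E_def factor_def by (auto intro: finite_subset[of _ \<Sigma>])
  have RS_F: "right_special w n \<subseteq> F"
    unfolding right_special_def F_def factors_of_length_def by (auto dest: factor_snoc)
  have "(\<Sum>u\<in>F. if u \<in> right_special w n then 1 else 0) = card (right_special w n)"
    using RS_F finF by (simp add: sum.If_cases Int_absorb1)
  then have "complexity w n + card (right_special w n)
      = (\<Sum>u\<in>F. 1 + (if u \<in> right_special w n then 1 else 0))"
    by (simp only: sum.distrib) (simp add: complexity_def F_def)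
  also have "\<dots> \<le> (\<Sum>u\<in>F. card (E u))"
  proof (rule sum_mono)
    fix u assume "u \<in> F"
    then obtain a where "a \<in> E u" using factor_snoc_exists unfolding F_def factors_of_length_def E_def by auto
    then have "1 \<le> card (E u)" using finE card_0_eq[of "E u"] by fastforce
    moreover have "2 \<le> card (E u)" if u: "u \<in> right_special w n"
    proof -
      obtain a b where "a \<noteq> b" "a \<in> E u" "b \<in> E u" using u unfolding right_special_def E_def by blast
      then show ?thesis using card_mono[OF finE, of "{a, b}" u] by simp
    qed
    ultimately show "1 + (if u \<in> right_special w n then 1 else 0) \<le> card (E u)" by auto
  qed
  also have "\<dots> = card (SIGMA u:F. E u)" using finF finE by simp
  also have "\<dots> = card ((\<lambda>(u, a). u @ [a]) ` (SIGMA u:F. E u))"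
    by (rule card_image[symmetric]) (auto simp: inj_on_def)
  also have "\<dots> \<le> complexity w (Suc n)"
    unfolding complexity_def using finite_factors_of_length[OF assms]
    by (intro card_mono) (auto simp: F_def E_def factors_of_length_def)
  finally show ?thesis .
qed

lemma complexity_ge_linear:
  assumes "finite \<Sigma>" "\<forall>i. w i \<in> \<Sigma>" "\<And>n. N \<le> n \<Longrightarrow> K \<le> card (right_special w n)"
  shows "K * j \<le> complexity w (N + j)"
proof (induction j)
  case (Suc j)
  then show ?case
    using assms(3)[of "N + j"] complexity_Suc_ge[OF assms(1,2), of "N + j"] by simp
qed simp

lemma le_slope_if_linear_bound:
  fixes A B :: real
  assumes "\<And>j. real K * real j \<le> A * real (N + j) + B"
  shows "real K \<le> A"
proof (rule ccontr)
  assume "\<not> real K \<le> A"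
  then obtain j where "A * real N + B < real j * (real K - A)"
    using ex_less_of_nat_mult[of "real K - A"] by auto
  then show False using assms[of j] by (simp add: algebra_simps)
qed

definition primitive_power_roots :: "(nat \<Rightarrow> 'a) \<Rightarrow> 'a list set" where
  "primitive_power_roots w = {y. primitive y \<and> (\<forall>m\<ge>1. factor (list_pow y m) w)}"

lemma card_le_card_right_special:
  assumes "finite \<Sigma>" "\<forall>i. w i \<in> \<Sigma>" "\<not> eventually_periodic w" "finite T"
    and "T \<subseteq> length ` primitive_power_roots w" "\<And>l. l \<in> T \<Longrightarrow> 2 * l \<le> n"
  shows "card T \<le> card (right_special w n)"
proof -
  have "\<exists>y s. length y = l \<and> primitive y \<and> map (shifted_power y s) [0..<n] \<in> right_special w n"
    if l: "l \<in> T" for l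
  proof -
    obtain y where y: "length y = l" "primitive y" "\<forall>m\<ge>1. factor (list_pow y m) w"
      using assms(5) l unfolding primitive_power_roots_def by blast
    have "y \<noteq> []" using y(2) by (simp add: primitive_def)
    moreover have "factor (list_pow y (Suc n)) w" using y(3) by simp
    ultimately obtain s where "map (shifted_power y s) [0..<n] \<in> right_special w n"
      using right_special_segment_of_power[OF assms(3)] by blast
    then show ?thesis using y by blast
  qed
  then obtain y s where ys: "\<And>l. l \<in> T \<Longrightarrow> length (y l) = l \<and> primitive (y l)
      \<and> map (shifted_power (y l) (s l)) [0..<n] \<in> right_special w n"
    by metis
  define seg where "seg l = map (shifted_power (y l) (s l)) [0..<n]" for l
  have "inj_on seg T"
  proof (rule inj_onI)
    fix l l' assume "l \<in> T" "l' \<in> T" "seg l = seg l'"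
    then have "\<And>t. t < n \<Longrightarrow> shifted_power (y l) (s l) t = shifted_power (y l') (s l') t"
      unfolding seg_def by (metis diff_zero nth_map_upt add_0)
    then show "l = l'"
      using ys[OF \<open>l \<in> T\<close>] ys[OF \<open>l' \<in> T\<close>] assms(6)[OF \<open>l \<in> T\<close>] assms(6)[OF \<open>l' \<in> T\<close>]
        length_eq_if_shifted_powers_agree[of "y l" "y l'" n "s l" "s l'"] by simp
  qed
  moreover have "seg ` T \<subseteq> right_special w n" using ys unfolding seg_def by blast
  moreover have "finite (right_special w n)"
    using finite_factors_of_length[OF assms(1,2), of n]
    by (rule finite_subset[rotated]) (auto simp: right_special_def factors_of_length_def dest: factor_snoc)
  ultimately show ?thesis by (rule card_inj_on_le)
qed

lemma finite_lengths_if_eventually_periodic: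
  assumes "eventually_periodic w"
  shows "finite (length ` primitive_power_roots w)"
proof -
  obtain i P where P: "0 < P" "\<forall>k\<ge>i. w (k + P) = w k"
    using assms unfolding eventually_periodic_def by blast
  have "length y dvd P" if "y \<in> primitive_power_roots w" for y
    using that unfolding primitive_power_roots_def by (intro length_dvd_eventual_period[OF _ _ P]) simp_all
  then have "length ` primitive_power_roots w \<subseteq> {..P}" using dvd_imp_le[OF _ P(1)] by blast
  then show ?thesis by (rule finite_subset) simp
qed

lemma finite_lengths_if_linear_complexity:
  assumes "finite \<Sigma>" "\<forall>i. w i \<in> \<Sigma>" "\<not> eventually_periodic w" "linear_complexity w"
  shows "finite (length ` primitive_power_roots w)"
proof (rule ccontr)
  assume "infinite (length ` primitive_power_roots w)"
  obtain A B :: real where AB: "\<And>n. real (complexity w n) \<le> A * real n + B"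
    using assms(4) unfolding linear_complexity_def by blast
  obtain T where T: "finite T" "card T = nat \<lceil>A\<rceil> + 1" "T \<subseteq> length ` primitive_power_roots w"
    using infinite_arbitrarily_large[OF \<open>infinite _\<close>] by meson
  define N where "N = 2 * Max (insert 0 T)"
  have "card T \<le> card (right_special w n)" if "N \<le> n" for n
  proof (rule card_le_card_right_special[OF assms(1-3) T(1,3)])
    fix l assume "l \<in> T"
    then have "l \<le> Max (insert 0 T)" using T(1) by simp
    then show "2 * l \<le> n" using \<open>N \<le> n\<close> unfolding N_def by linarith
  qed
  then have "card T * j \<le> complexity w (N + j)" for j
    by (rule complexity_ge_linear[OF assms(1,2)])
  then have "real (card T) * real j \<le> A * real (N + j) + B" for j
    using AB[of "N + j"] by (metis of_nat_mult of_nat_le_iff order.trans)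
  then have "real (card T) \<le> A" by (rule le_slope_if_linear_bound)
  then show False using T(2) real_nat_ceiling_ge[of A] by linarith
qed

theorem theorem2:
  fixes \<Sigma> :: "'a set" and w :: "nat \<Rightarrow> 'a"
  assumes "finite \<Sigma>" and "\<forall>i. w i \<in> \<Sigma>"
    and "linear_complexity w"
  shows "finite {y. factor y w \<and> primitive y \<and> (\<forall>n\<ge>1. factor (list_pow y n) w)}"
proof -
  have "finite (length ` primitive_power_roots w)"
    using finite_lengths_if_eventually_periodic finite_lengths_if_linear_complexity[OF assms(1,2) _ assms(3)]
    by blast
  then have "{y. factor y w \<and> primitive y \<and> (\<forall>n\<ge>1. factor (list_pow y n) w)}
      \<subseteq> {u. factor u w \<and> length u \<le> Max (length ` primitive_power_roots w)}"
    by (auto simp: primitive_power_roots_def)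
  then show ?thesis using finite_factors_length_le[OF assms(1,2)] by (rule finite_subset)
qed

end
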